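(* Let $N$ be a finite or infinite set and $\mathcal A\subseteq\mathcal P(N)$ a field of sets over $N$. Let $v\colon\mathcal A\to\mathbb R$ be a coalition function with $v(\emptyset)=0$ which is bounded below (there is $L\in\mathbb R$ with $v(S)\ge L$ for all $S\in\mathcal A$). For each $\varepsilon>0$ define $v_\varepsilon\colon\mathcal A\to\mathbb R$ by $v_\varepsilon(N)=v(N)+\varepsilon$ and $v_\varepsilon(S)=v(S)$ for all $S\in\mathcal A\setminus\{N\}$. If $\mathrm{ba\text{-}core}(v_\varepsilon)\neq\emptyset$ for all $\varepsilon>0$, then $\mathrm{ba\text{-}core}(v)\neq\emptyset$.
   Context: A field of sets over $N$ is a collection $\mathcal A\subseteq\mathcal P(N)$ with $\emptyset\in\mathcal A$, closed under complements in $N$ and finite unions. $\mathrm{ba}(\mathcal A)$ is the set of bounded additive set functions $\mu\colon\mathcal A\to\mathbb R$ (bounded: $\sup_{S\in\mathcal A}|\mu(S)|<\infty$; additive: $\mu(S\cup T)=\mu(S)+\mu(T)$ for disjoint $S,T\in\mathcal A$). For a coalition function $w\colon\mathcal A\to\mathbb R$, $\mathrm{ba\text{-}core}(w)=\{\mu\in\mathrm{ba}(\mathcal A):\mu(N)=w(N),\ \mu(S)\ge w(S)\text{ for all }S\in\mathcal A\setminus\{N\}\}$. *)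

theory Defs
  imports Complex_Main "HOL-Library.FuncSet"
begin

definition field_of_sets :: "'a set \<Rightarrow> 'a set set \<Rightarrow> bool" where
  "field_of_sets N \<A> \<longleftrightarrow> \<A> \<subseteq> Pow N \<and> {} \<in> \<A> \<and>
     (\<forall>S\<in>\<A>. N - S \<in> \<A>) \<and> (\<forall>S\<in>\<A>. \<forall>T\<in>\<A>. S \<union> T \<in> \<A>)"

definition ba :: "'a set set \<Rightarrow> ('a set \<Rightarrow> real) set" where
  "ba \<A> = {\<mu> \<in> extensional \<A>.
      (\<exists>B. \<forall>S\<in>\<A>. \<bar>\<mu> S\<bar> \<le> B) \<and>
      (\<forall>S\<in>\<A>. \<forall>T\<in>\<A>. S \<inter> T = {} \<longrightarrow> \<mu> (S \<union> T) = \<mu> S + \<mu> T)}"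

definition ba_core :: "'a set \<Rightarrow> 'a set set \<Rightarrow> ('a set \<Rightarrow> real) \<Rightarrow> ('a set \<Rightarrow> real) set" where
  "ba_core N \<A> w = {\<mu> \<in> ba \<A>. \<mu> N = w N \<and> (\<forall>S\<in>\<A> - {N}. \<mu> S \<ge> w S)}"

end

theory Submission
  imports Defs "HOL-Analysis.Function_Topology"
begin

text \<open>An element \<open>\<mu>\<close> of the core of \<open>v\<^sub>\<epsilon>\<close> is additive and bounded below by any
  lower bound \<open>L\<close> of \<open>v\<close>, hence also bounded above by \<open>v(N) + \<epsilon> - L\<close> because
  \<open>\<mu>(S) + \<mu>(N - S) = \<mu>(N)\<close>. So the relaxed cores, the additive \<open>\<mu>\<close> with
  \<open>\<mu> \<ge> v\<close> off \<open>N\<close> and \<open>v(N) \<le> \<mu>(N) \<le> v(N) + \<epsilon>\<close>, are closed subsets of a box that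
  is compact in the product topology by Tychonoff's theorem. They are nonempty by hypothesis
  and shrink with \<open>\<epsilon>\<close>, so their intersection, which lies in the core of \<open>v\<close>, is
  nonempty.\<close>

definition additive_on :: "'a set set \<Rightarrow> ('a set \<Rightarrow> 'b::plus) \<Rightarrow> bool" where
  "additive_on \<A> \<mu> \<longleftrightarrow> (\<forall>S\<in>\<A>. \<forall>T\<in>\<A>. S \<inter> T = {} \<longrightarrow> \<mu> (S \<union> T) = \<mu> S + \<mu> T)"

lemma ba_iff:
  "\<mu> \<in> ba \<A> \<longleftrightarrow> \<mu> \<in> extensional \<A> \<and> (\<exists>B. \<forall>S\<in>\<A>. \<bar>\<mu> S\<bar> \<le> B) \<and> additive_on \<A> \<mu>"
  by (simp add: ba_def additive_on_def)

lemma additive_on_complement: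
  assumes "field_of_sets N \<A>" "additive_on \<A> \<mu>" "S \<in> \<A>"
  shows "\<mu> N = \<mu> S + \<mu> (N - S)"
proof -
  have "N - S \<in> \<A>" "S \<union> (N - S) = N"
    using assms(1,3) unfolding field_of_sets_def by auto
  then show ?thesis
    using assms(2,3) unfolding additive_on_def by (metis Diff_disjoint)
qed

lemma closed_additive_on:
  "closed {\<mu> :: 'a set \<Rightarrow> 'b::{t2_space, topological_monoid_add}. additive_on \<A> \<mu>}"
  unfolding additive_on_def Ball_def
  by (intro closed_Collect_all closed_Collect_imp closed_Collect_eq open_Collect_const
      continuous_intros continuous_on_product_coordinates)

lemma closed_extensional: "closed (extensional A :: ('a \<Rightarrow> 'b::t2_space) set)"
  unfolding extensional_def
  by (intro closed_Collect_all closed_Collect_imp open_Collect_const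
      closed_Collect_eq[OF continuous_on_product_coordinates continuous_on_const])

lemma compact_PiE_UNIV:
  fixes B :: "'i \<Rightarrow> 'b::topological_space set"
  assumes "\<And>i. compact (B i)"
  shows "compact (PiE UNIV B)"
proof -
  have "compactin (product_topology (\<lambda>i. euclidean) UNIV) (PiE UNIV B)"
    unfolding compactin_PiE using assms by (simp add: compactin_euclidean_iff)
  then show ?thesis by (simp add: euclidean_product_topology compactin_euclidean_iff)
qed

lemma decseq_closed_Inter_nonempty:
  fixes F :: "nat \<Rightarrow> 'a::topological_space set"
  assumes "compact (F 0)" "\<And>n. closed (F n)" "\<And>n. F n \<noteq> {}" "decseq F"
  shows "(\<Inter>n. F n) \<noteq> {}"
proof -
  have "F 0 \<inter> (\<Inter>n\<in>UNIV. F n) \<noteq> {}"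
  proof (rule compact_imp_fip_image[OF assms(1)])
    fix I :: "nat set" assume "finite I"
    then have "n \<le> Max (insert 0 I)" if "n \<in> I \<or> n = 0" for n
      using that by auto
    then have "F (Max (insert 0 I)) \<subseteq> F 0 \<inter> (\<Inter>n\<in>I. F n)"
      using \<open>decseq F\<close> by (auto dest: decseqD)
    then show "F 0 \<inter> (\<Inter>n\<in>I. F n) \<noteq> {}" using assms(3) by blast
  qed (use assms(2) in blast)
  then show ?thesis by blast
qed

definition relaxed_core ::
    "'a set \<Rightarrow> 'a set set \<Rightarrow> ('a set \<Rightarrow> real) \<Rightarrow> real \<Rightarrow> ('a set \<Rightarrow> real) set" where
  "relaxed_core N \<A> v \<epsilon> = {\<mu> \<in> extensional \<A>. additive_on \<A> \<mu> \<and>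
      v N \<le> \<mu> N \<and> \<mu> N \<le> v N + \<epsilon> \<and> (\<forall>S\<in>\<A> - {N}. v S \<le> \<mu> S)}"

lemma relaxed_core_mono: "\<epsilon> \<le> \<delta> \<Longrightarrow> relaxed_core N \<A> v \<epsilon> \<subseteq> relaxed_core N \<A> v \<delta>"
  unfolding relaxed_core_def by auto

lemma ba_core_perturbed_subset_relaxed_core:
  assumes "\<epsilon> \<ge> 0"
  shows "ba_core N \<A> (\<lambda>S. if S = N then v N + \<epsilon> else v S) \<subseteq> relaxed_core N \<A> v \<epsilon>"
  using assms unfolding ba_core_def relaxed_core_def ba_iff by auto

lemma relaxed_core_bounds:
  assumes "field_of_sets N \<A>" "\<And>S. S \<in> \<A> \<Longrightarrow> L \<le> v S"
    and "\<mu> \<in> relaxed_core N \<A> v \<epsilon>" "S \<in> \<A>"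
  shows "L \<le> \<mu> S" "\<mu> S \<le> v N + \<epsilon> - L"
proof -
  have \<mu>: "additive_on \<A> \<mu>" "v N \<le> \<mu> N" "\<mu> N \<le> v N + \<epsilon>"
    "\<And>T. T \<in> \<A> \<Longrightarrow> T \<noteq> N \<Longrightarrow> v T \<le> \<mu> T"
    using assms(3) unfolding relaxed_core_def by auto
  have lower: "L \<le> \<mu> T" if "T \<in> \<A>" for T
    using \<mu>(2) \<mu>(4)[OF that] assms(2)[OF that] by (cases "T = N") auto
  then show "L \<le> \<mu> S" using assms(4) .
  have "N - S \<in> \<A>" using assms(1,4) unfolding field_of_sets_def by blast
  then show "\<mu> S \<le> v N + \<epsilon> - L"
    using additive_on_complement[OF assms(1) \<mu>(1) assms(4)] lower[of "N - S"] \<mu>(3) by linarith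
qed

lemma closed_relaxed_core: "closed (relaxed_core N \<A> v \<epsilon>)"
  unfolding relaxed_core_def Ball_def Collect_conj_eq Collect_mem_eq
  by (intro closed_Int closed_extensional closed_Collect_conj closed_additive_on
      closed_Collect_all closed_Collect_imp closed_Collect_le open_Collect_const
      continuous_intros continuous_on_product_coordinates)

lemma compact_relaxed_core:
  assumes "field_of_sets N \<A>" "\<And>S. S \<in> \<A> \<Longrightarrow> L \<le> v S"
  shows "compact (relaxed_core N \<A> v \<epsilon>)"
proof -
  define B where "B S = (if S \<in> \<A> then {L..v N + \<epsilon> - L} else {undefined})" for S
  have "compact (PiE UNIV B)"
    by (rule compact_PiE_UNIV) (simp add: B_def)
  moreover have "relaxed_core N \<A> v \<epsilon> \<subseteq> PiE UNIV B"
    using relaxed_core_bounds[of N \<A> L v, OF assms]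
    by (auto simp: B_def relaxed_core_def extensional_def)
  ultimately show ?thesis
    using compact_Int_closed[OF _ closed_relaxed_core] by (metis inf.absorb_iff2)
qed

lemma Inter_relaxed_core_subset_ba_core:
  assumes "field_of_sets N \<A>" "\<And>S. S \<in> \<A> \<Longrightarrow> L \<le> v S"
  shows "(\<Inter>n. relaxed_core N \<A> v (1 / Suc n)) \<subseteq> ba_core N \<A> v"
proof
  fix \<mu> assume \<mu>: "\<mu> \<in> (\<Inter>n. relaxed_core N \<A> v (1 / Suc n))"
  have core: "\<mu> \<in> relaxed_core N \<A> v 1"
    using INT_D[OF \<mu>, of 0] by simp
  have "\<mu> N \<le> v N"
  proof (rule field_le_epsilon)
    fix e :: real assume "e > 0"
    then obtain n where "1 / real (Suc n) < e" using nat_approx_posE by blast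
    moreover have "\<mu> N \<le> v N + 1 / Suc n"
      using INT_D[OF \<mu>, of n] unfolding relaxed_core_def by blast
    ultimately show "\<mu> N \<le> v N + e" by linarith
  qed
  moreover have "\<bar>\<mu> S\<bar> \<le> \<bar>L\<bar> + \<bar>v N + 1 - L\<bar>" if "S \<in> \<A>" for S
    using relaxed_core_bounds[OF assms core that] by linarith
  ultimately show "\<mu> \<in> ba_core N \<A> v"
    using core unfolding relaxed_core_def ba_core_def ba_iff by auto
qed

theorem corollary6:
  fixes N :: "'a set" and \<A> :: "'a set set" and v :: "'a set \<Rightarrow> real"
  assumes "field_of_sets N \<A>"
    and "v {} = 0"
    and "\<exists>L. \<forall>S\<in>\<A>. v S \<ge> L"
    and "\<forall>\<epsilon>>0. ba_core N \<A> (\<lambda>S. if S = N then v N + \<epsilon> else v S) \<noteq> {}"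
  shows "ba_core N \<A> v \<noteq> {}"
proof -
  obtain L where L: "\<And>S. S \<in> \<A> \<Longrightarrow> L \<le> v S" using assms(3) by auto
  let ?F = "\<lambda>n. relaxed_core N \<A> v (1 / Suc n)"
  have "?F n \<noteq> {}" for n
  proof -
    have "ba_core N \<A> (\<lambda>S. if S = N then v N + 1 / Suc n else v S) \<noteq> {}"
      using assms(4) by simp
    then show ?thesis
      using ba_core_perturbed_subset_relaxed_core[of "1 / Suc n" N \<A> v] by auto
  qed
  moreover have "decseq ?F"
    by (intro decseq_SucI relaxed_core_mono) (simp add: frac_le)
  ultimately have "(\<Inter>n. ?F n) \<noteq> {}"
    by (intro decseq_closed_Inter_nonempty compact_relaxed_core[OF assms(1) L]
        closed_relaxed_core)
  then show ?thesis
    using Inter_relaxed_core_subset_ba_core[of N \<A> L v, OF assms(1) L] by blast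
qed

end
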